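(* Let $(X,\tau)$ be a fuzzifying topological space and let $\beta_P\in\Im(P(X))$ satisfy $\beta_P(A)\le\tau_P(A)$ for all $A\subseteq X$. Then $\beta_P$ is a pre-base of $\tau_P$ if and only if $\tau_P=\beta_P^{(\cup)}$, where $$\beta_P^{(\cup)}(A)=\bigvee\Big\{\bigwedge_{\lambda\in\Lambda}\beta_P(B_\lambda)\;:\;\{B_\lambda\}_{\lambda\in\Lambda}\subseteq P(X),\ \bigcup_{\lambda\in\Lambda}B_\lambda=A\Big\}.$$
   Context: $\Im(Y)$ denotes the set of fuzzy subsets $\mu:Y\to[0,1]$ of a set $Y$, and $P(X)$ the power set of $X$. A fuzzifying topology on $X$ is $\tau\in\Im(P(X))$ with $\tau(X)=1$, $\tau(A\cap B)\ge\min(\tau(A),\tau(B))$ and $\tau(\bigcup_\lambda A_\lambda)\ge\inf_\lambda\tau(A_\lambda)$. Its neighbourhood degrees are $N_x(A)=\sup_{x\in B\subseteq A}\tau(B)$, its closure is $Cl(A)(x)=1-N_x(X\setminus A)$, and for a fuzzy set $\mu\in\Im(X)$, $Int(\mu)(x)=\sup_{B\subseteq X,\,x\in B}\min(\tau(B),\inf_{y\in B}\mu(y))$. The fuzzifying pre-open sets are $\tau_P(A)=\inf_{x\in A}Int(Cl(A))(x)$, and the pre-neighbourhood degrees are $N^P_x(A)=\sup_{x\in B\subseteq A}\tau_P(B)$. A fuzzy family $\beta_P\in\Im(P(X))$ with $\beta_P\le\tau_P$ pointwise is called a pre-base of $\tau_P$ if for all $x\in X$ and $A\subseteq X$, $N^P_x(A)\le\sup_{x\in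 B\subseteq A}\beta_P(B)$. *)

theory Defs
  imports Complex_Main
begin

text \<open>Sup/Inf on [0,1] with lattice conventions: sup of empty set is 0, inf of empty set is 1.\<close>
definition fsup :: "real set \<Rightarrow> real" where
  "fsup S = (if S = {} then 0 else Sup S)"
definition finf :: "real set \<Rightarrow> real" where
  "finf S = (if S = {} then 1 else Inf S)"

text \<open>Fuzzy subsets of P(X): functions on sets with values in [0,1] (on subsets of X).\<close>
definition fuzzy_family :: "'a set \<Rightarrow> ('a set \<Rightarrow> real) \<Rightarrow> bool" where
  "fuzzy_family X \<tau> \<longleftrightarrow> (\<forall>A. A \<subseteq> X \<longrightarrow> 0 \<le> \<tau> A \<and> \<tau> A \<le> 1)"

definition fuzzifying_topology :: "'a set \<Rightarrow> ('a set \<Rightarrow> real) \<Rightarrow> bool" where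
  "fuzzifying_topology X \<tau> \<longleftrightarrow> fuzzy_family X \<tau> \<and> \<tau> X = 1
     \<and> (\<forall>A B. A \<subseteq> X \<longrightarrow> B \<subseteq> X \<longrightarrow> \<tau> (A \<inter> B) \<ge> min (\<tau> A) (\<tau> B))
     \<and> (\<forall>\<A>. \<A> \<subseteq> Pow X \<longrightarrow> \<tau> (\<Union>\<A>) \<ge> finf (\<tau> ` \<A>))"

definition nbhd :: "'a set \<Rightarrow> ('a set \<Rightarrow> real) \<Rightarrow> 'a \<Rightarrow> 'a set \<Rightarrow> real" where
  "nbhd X \<tau> x A = fsup {\<tau> B | B. x \<in> B \<and> B \<subseteq> A}"

definition fclosure :: "'a set \<Rightarrow> ('a set \<Rightarrow> real) \<Rightarrow> 'a set \<Rightarrow> 'a \<Rightarrow> real" where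
  "fclosure X \<tau> A x = 1 - nbhd X \<tau> x (X - A)"

definition finterior :: "'a set \<Rightarrow> ('a set \<Rightarrow> real) \<Rightarrow> ('a \<Rightarrow> real) \<Rightarrow> 'a \<Rightarrow> real" where
  "finterior X \<tau> \<mu> x = fsup {min (\<tau> B) (finf (\<mu> ` B)) | B. B \<subseteq> X \<and> x \<in> B}"

definition preopen :: "'a set \<Rightarrow> ('a set \<Rightarrow> real) \<Rightarrow> 'a set \<Rightarrow> real" where
  "preopen X \<tau> A = finf ((finterior X \<tau> (fclosure X \<tau> A)) ` A)"

definition pre_nbhd :: "'a set \<Rightarrow> ('a set \<Rightarrow> real) \<Rightarrow> 'a \<Rightarrow> 'a set \<Rightarrow> real" where
  "pre_nbhd X \<tau> x A = fsup {preopen X \<tau> B | B. x \<in> B \<and> B \<subseteq> A}"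

definition is_pre_base :: "'a set \<Rightarrow> ('a set \<Rightarrow> real) \<Rightarrow> ('a set \<Rightarrow> real) \<Rightarrow> bool" where
  "is_pre_base X \<tau> \<beta> \<longleftrightarrow> (\<forall>A. A \<subseteq> X \<longrightarrow> \<beta> A \<le> preopen X \<tau> A)
     \<and> (\<forall>x\<in>X. \<forall>A. A \<subseteq> X \<longrightarrow> pre_nbhd X \<tau> x A \<le> fsup {\<beta> B | B. x \<in> B \<and> B \<subseteq> A})"

definition union_closure :: "'a set \<Rightarrow> ('a set \<Rightarrow> real) \<Rightarrow> 'a set \<Rightarrow> real" where
  "union_closure X \<beta> A = fsup {finf (\<beta> ` \<B>) | \<B>. \<B> \<subseteq> Pow X \<and> \<Union>\<B> = A}"

end

theory Submission
  imports Defs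
begin

text \<open>Two identities drive the proof. Fuzzy closure and interior are monotone, so pre-openness
  is closed under arbitrary unions and \<tau>_P(A) = inf_{x \<in> A} N^P_x(A). For any fuzzy family \<beta>,
  choosing for each x \<in> A a set x \<in> B_x \<subseteq> A with \<beta>(B_x) close to N^\<beta>_x(A) gives
  \<beta>^(\<union>)(A) = inf_{x \<in> A} N^\<beta>_x(A). Since \<beta> \<le> \<tau>_P forces N^\<beta> \<le> N^P, \<beta> is a pre-base exactly
  when N^P = N^\<beta>, and then the two infima agree. Conversely, \<tau>_P = \<beta>^(\<union>) gives
  \<tau>_P(B) \<le> N^\<beta>_x(B) \<le> N^\<beta>_x(A) whenever x \<in> B \<subseteq> A.\<close>

lemma bdd_above_unit: "S \<subseteq> {0..1::real} \<Longrightarrow> bdd_above S"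
  by (rule bdd_above_mono[OF bdd_above_Icc])

lemma bdd_below_unit: "S \<subseteq> {0..1::real} \<Longrightarrow> bdd_below S"
  by (rule bdd_below_mono[OF bdd_below_Icc])

lemma fsup_upper: "S \<subseteq> {0..1} \<Longrightarrow> s \<in> S \<Longrightarrow> s \<le> fsup S"
  unfolding fsup_def by (auto intro!: cSup_upper bdd_above_unit)

lemma fsup_least: "(\<And>s. s \<in> S \<Longrightarrow> s \<le> c) \<Longrightarrow> 0 \<le> c \<Longrightarrow> fsup S \<le> c"
  unfolding fsup_def by (auto intro!: cSup_least)

lemma finf_lower: "S \<subseteq> {0..1} \<Longrightarrow> s \<in> S \<Longrightarrow> finf S \<le> s"
  unfolding finf_def by (auto intro!: cInf_lower bdd_below_unit)

lemma finf_greatest: "(\<And>s. s \<in> S \<Longrightarrow> c \<le> s) \<Longrightarrow> c \<le> 1 \<Longrightarrow> c \<le> finf S"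
  unfolding finf_def by (auto intro!: cInf_greatest)

lemma fsup_in_unit:
  assumes "S \<subseteq> {0..1}"
  shows "fsup S \<in> {0..1}"
proof (cases "S = {}")
  case False
  then obtain s where "s \<in> S" by blast
  then have "0 \<le> fsup S" using assms fsup_upper[OF assms] by force
  moreover have "fsup S \<le> 1" using assms by (intro fsup_least) auto
  ultimately show ?thesis by simp
qed (simp add: fsup_def)

lemma finf_in_unit:
  assumes "S \<subseteq> {0..1}"
  shows "finf S \<in> {0..1}"
proof (cases "S = {}")
  case False
  then obtain s where "s \<in> S" by blast
  then have "finf S \<le> 1" using assms finf_lower[OF assms] by force
  moreover have "0 \<le> finf S" using assms by (intro finf_greatest) auto
  ultimately show ?thesis by simp
qed (simp add: finf_def)

lemma fsup_mono:
  assumes "T \<subseteq> {0..1}" and "\<And>s. s \<in> S \<Longrightarrow> \<exists>t\<in>T. s \<le> t"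
  shows "fsup S \<le> fsup T"
  using assms fsup_in_unit[OF assms(1)] by (fastforce intro: fsup_least order_trans[OF _ fsup_upper])

lemma finf_mono:
  assumes "S \<subseteq> {0..1}" and "\<And>t. t \<in> T \<Longrightarrow> \<exists>s\<in>S. s \<le> t"
  shows "finf S \<le> finf T"
  using assms finf_in_unit[OF assms(1)] by (fastforce intro: finf_greatest order_trans[OF finf_lower])

lemma less_fsupD:
  assumes "c < fsup S" "0 \<le> c" "S \<subseteq> {0..1}"
  shows "\<exists>s\<in>S. c < s"
proof -
  have "S \<noteq> {}" using assms(1,2) by (auto simp: fsup_def)
  then show ?thesis using assms(1) bdd_above_unit[OF assms(3)] by (simp add: fsup_def less_cSup_iff)
qed

lemma fuzzy_familyD: "fuzzy_family X \<beta> \<Longrightarrow> A \<subseteq> X \<Longrightarrow> \<beta> A \<in> {0..1}"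
  unfolding fuzzy_family_def by auto

lemma fuzzy_familyI: "(\<And>A. A \<subseteq> X \<Longrightarrow> \<beta> A \<in> {0..1}) \<Longrightarrow> fuzzy_family X \<beta>"
  unfolding fuzzy_family_def by simp

lemma fuzzy_family_image_unit: "fuzzy_family X \<beta> \<Longrightarrow> \<B> \<subseteq> Pow X \<Longrightarrow> \<beta> ` \<B> \<subseteq> {0..1}"
  by (auto dest: fuzzy_familyD)

lemma fuzzy_family_Collect_unit:
  assumes "fuzzy_family X \<beta>" "A \<subseteq> X"
  shows "{\<beta> B |B. P B \<and> B \<subseteq> A} \<subseteq> {0..1}"
proof
  fix s assume "s \<in> {\<beta> B |B. P B \<and> B \<subseteq> A}"
  then obtain B where "B \<subseteq> A" "s = \<beta> B" by blast
  then show "s \<in> {0..1}" using assms fuzzy_familyD by blast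
qed

lemma nbhd_in_unit: "fuzzy_family X \<beta> \<Longrightarrow> A \<subseteq> X \<Longrightarrow> nbhd X \<beta> x A \<in> {0..1}"
  unfolding nbhd_def by (intro fsup_in_unit fuzzy_family_Collect_unit)

lemma nbhd_mono:
  assumes "fuzzy_family X \<beta>" "A' \<subseteq> X" "A \<subseteq> A'"
  shows "nbhd X \<beta> x A \<le> nbhd X \<beta> x A'"
  unfolding nbhd_def using assms(3)
  by (intro fsup_mono fuzzy_family_Collect_unit[OF assms(1,2)]) blast

lemma nbhd_mono_family:
  assumes "fuzzy_family X \<gamma>" "A \<subseteq> X" "\<And>B. B \<subseteq> A \<Longrightarrow> \<beta> B \<le> \<gamma> B"
  shows "nbhd X \<beta> x A \<le> nbhd X \<gamma> x A"
  unfolding nbhd_def using assms(3)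
  by (intro fsup_mono fuzzy_family_Collect_unit[OF assms(1,2)]) blast

lemma pre_nbhd_eq_nbhd: "pre_nbhd X \<tau> x A = nbhd X (preopen X \<tau>) x A"
  unfolding pre_nbhd_def nbhd_def ..

lemma union_closure_values_unit:
  assumes "fuzzy_family X \<beta>"
  shows "{finf (\<beta> ` \<B>) |\<B>. \<B> \<subseteq> Pow X \<and> \<Union>\<B> = A} \<subseteq> {0..1}"
  using finf_in_unit[OF fuzzy_family_image_unit[OF assms]] by blast

lemma union_closure_ge:
  assumes "fuzzy_family X \<beta>" "\<B> \<subseteq> Pow X" "\<Union>\<B> = A"
  shows "finf (\<beta> ` \<B>) \<le> union_closure X \<beta> A"
  unfolding union_closure_def using assms(2,3)
  by (intro fsup_upper union_closure_values_unit[OF assms(1)]) blast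

lemma union_closure_in_unit: "fuzzy_family X \<beta> \<Longrightarrow> union_closure X \<beta> A \<in> {0..1}"
  unfolding union_closure_def by (intro fsup_in_unit union_closure_values_unit)

lemma fuzzy_family_union_closure: "fuzzy_family X \<beta> \<Longrightarrow> fuzzy_family X (union_closure X \<beta>)"
  by (rule fuzzy_familyI) (rule union_closure_in_unit)

lemma union_closure_eq_self:
  assumes "fuzzy_family X \<gamma>" "A \<subseteq> X"
    and Union_closed: "\<And>\<B>. \<B> \<subseteq> Pow X \<Longrightarrow> finf (\<gamma> ` \<B>) \<le> \<gamma> (\<Union>\<B>)"
  shows "union_closure X \<gamma> A = \<gamma> A"
proof (rule antisym)
  show "union_closure X \<gamma> A \<le> \<gamma> A"
    unfolding union_closure_def using Union_closed fuzzy_familyD[OF assms(1,2)]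
    by (intro fsup_least) auto
  show "\<gamma> A \<le> union_closure X \<gamma> A"
    using union_closure_ge[OF assms(1), of "{A}"] assms(2) by (simp add: finf_def)
qed

lemma union_closure_le_nbhd:
  assumes "fuzzy_family X \<beta>" "A \<subseteq> X" "x \<in> A"
  shows "union_closure X \<beta> A \<le> nbhd X \<beta> x A"
  unfolding union_closure_def
proof (rule fsup_least)
  fix s assume "s \<in> {finf (\<beta> ` \<B>) |\<B>. \<B> \<subseteq> Pow X \<and> \<Union>\<B> = A}"
  then obtain \<B> C where \<B>: "\<B> \<subseteq> Pow X" "\<Union>\<B> = A" "s = finf (\<beta> ` \<B>)" and C: "C \<in> \<B>" "x \<in> C"
    using assms(3) by auto
  have "s \<le> \<beta> C"
    using \<B> C fuzzy_family_image_unit[OF assms(1) \<B>(1)] by (auto intro: finf_lower)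
  also have "\<beta> C \<le> nbhd X \<beta> x A"
    unfolding nbhd_def using \<B> C
    by (intro fsup_upper fuzzy_family_Collect_unit[OF assms(1,2)]) blast+
  finally show "s \<le> nbhd X \<beta> x A" .
qed (use nbhd_in_unit[OF assms(1,2)] in auto)

lemma finf_nbhd_le_union_closure:
  assumes "fuzzy_family X \<beta>" "A \<subseteq> X"
  shows "finf ((\<lambda>x. nbhd X \<beta> x A) ` A) \<le> union_closure X \<beta> A"
proof (rule dense_le)
  fix c assume c: "c < finf ((\<lambda>x. nbhd X \<beta> x A) ` A)"
  show "c \<le> union_closure X \<beta> A"
  proof (cases "c < 0")
    case True then show ?thesis using union_closure_in_unit[OF assms(1), of A] by simp
  next
    case False
    have N_unit: "(\<lambda>x. nbhd X \<beta> x A) ` A \<subseteq> {0..1}" using nbhd_in_unit[OF assms] by auto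
    have "\<exists>B. x \<in> B \<and> B \<subseteq> A \<and> c < \<beta> B" if "x \<in> A" for x
    proof -
      have "c < nbhd X \<beta> x A" using c finf_lower[OF N_unit, of "nbhd X \<beta> x A"] that by force
      then show ?thesis
        unfolding nbhd_def using less_fsupD[OF _ _ fuzzy_family_Collect_unit[OF assms]] False
        by fastforce
    qed
    then obtain g where g: "\<And>x. x \<in> A \<Longrightarrow> x \<in> g x \<and> g x \<subseteq> A \<and> c < \<beta> (g x)" by metis
    have "c \<le> finf (\<beta> ` g ` A)"
      using g c finf_in_unit[OF N_unit] by (intro finf_greatest) (auto intro: less_imp_le)
    also have "\<dots> \<le> union_closure X \<beta> A"
      using g assms by (intro union_closure_ge) auto
    finally show ?thesis .
  qed
qed

lemma union_closure_eq_finf_nbhd: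
  assumes "fuzzy_family X \<beta>" "A \<subseteq> X"
  shows "union_closure X \<beta> A = finf ((\<lambda>x. nbhd X \<beta> x A) ` A)"
  using assms union_closure_in_unit[OF assms(1)] union_closure_le_nbhd[OF assms]
  by (intro antisym[OF _ finf_nbhd_le_union_closure[OF assms]] finf_greatest) auto

lemma nbhd_union_closure_le:
  assumes "fuzzy_family X \<beta>" "A \<subseteq> X"
  shows "nbhd X (union_closure X \<beta>) x A \<le> nbhd X \<beta> x A"
  unfolding nbhd_def[of X "union_closure X \<beta>"]
proof (rule fsup_least)
  fix s assume "s \<in> {union_closure X \<beta> B |B. x \<in> B \<and> B \<subseteq> A}"
  then obtain B where B: "x \<in> B" "B \<subseteq> A" "s = union_closure X \<beta> B" by auto
  then have "s \<le> nbhd X \<beta> x B" using assms by (auto intro: union_closure_le_nbhd)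
  also have "\<dots> \<le> nbhd X \<beta> x A" using B assms by (intro nbhd_mono) auto
  finally show "s \<le> nbhd X \<beta> x A" .
qed (use nbhd_in_unit[OF assms] in auto)

lemma fclosure_in_unit: "fuzzy_family X \<tau> \<Longrightarrow> fclosure X \<tau> A y \<in> {0..1}"
  unfolding fclosure_def using nbhd_in_unit[of X \<tau> "X - A"] by auto

lemma fclosure_mono:
  "fuzzy_family X \<tau> \<Longrightarrow> A \<subseteq> A' \<Longrightarrow> fclosure X \<tau> A y \<le> fclosure X \<tau> A' y"
  unfolding fclosure_def using nbhd_mono[of X \<tau> "X - A" "X - A'" y] by auto

lemma finterior_values_unit:
  assumes "fuzzy_family X \<tau>" "range \<mu> \<subseteq> {0..1}"
  shows "{min (\<tau> B) (finf (\<mu> ` B)) |B. B \<subseteq> X \<and> x \<in> B} \<subseteq> {0..1}"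
proof safe
  fix B assume "B \<subseteq> X"
  have "\<tau> B \<in> {0..1}" using assms(1) \<open>B \<subseteq> X\<close> by (rule fuzzy_familyD)
  moreover have "finf (\<mu> ` B) \<in> {0..1}" using assms(2) by (intro finf_in_unit) auto
  ultimately show "min (\<tau> B) (finf (\<mu> ` B)) \<in> {0..1}" by auto
qed

lemma finterior_in_unit:
  "fuzzy_family X \<tau> \<Longrightarrow> range \<mu> \<subseteq> {0..1} \<Longrightarrow> finterior X \<tau> \<mu> x \<in> {0..1}"
  unfolding finterior_def by (intro fsup_in_unit finterior_values_unit)

lemma finterior_mono:
  assumes "fuzzy_family X \<tau>" "range \<mu> \<subseteq> {0..1}" "range \<mu>' \<subseteq> {0..1}" "\<mu> \<le> \<mu>'"
  shows "finterior X \<tau> \<mu> x \<le> finterior X \<tau> \<mu>' x"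
  unfolding finterior_def
proof (rule fsup_mono[OF finterior_values_unit[OF assms(1,3)]])
  fix s assume "s \<in> {min (\<tau> B) (finf (\<mu> ` B)) |B. B \<subseteq> X \<and> x \<in> B}"
  then obtain B where B: "B \<subseteq> X" "x \<in> B" "s = min (\<tau> B) (finf (\<mu> ` B))" by blast
  have "finf (\<mu> ` B) \<le> finf (\<mu>' ` B)"
    using assms(2,4) by (intro finf_mono) (auto simp: le_fun_def)
  then have "s \<le> min (\<tau> B) (finf (\<mu>' ` B))" using B(3) by linarith
  then show "\<exists>t\<in>{min (\<tau> B) (finf (\<mu>' ` B)) |B. B \<subseteq> X \<and> x \<in> B}. s \<le> t"
    using B(1,2) by blast
qed

lemma preopen_in_unit: "fuzzy_family X \<tau> \<Longrightarrow> preopen X \<tau> A \<in> {0..1}"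
  unfolding preopen_def
  by (intro finf_in_unit) (auto intro!: finterior_in_unit dest: fclosure_in_unit)

lemma fuzzy_family_preopen: "fuzzy_family X \<tau> \<Longrightarrow> fuzzy_family X (preopen X \<tau>)"
  by (rule fuzzy_familyI) (rule preopen_in_unit)

lemma preopen_Union_ge:
  assumes "fuzzy_family X \<tau>"
  shows "finf (preopen X \<tau> ` \<B>) \<le> preopen X \<tau> (\<Union>\<B>)"
  unfolding preopen_def[of X \<tau> "\<Union>\<B>"]
proof (rule finf_mono)
  show "preopen X \<tau> ` \<B> \<subseteq> {0..1}" using preopen_in_unit[OF assms] by auto
  fix t assume "t \<in> finterior X \<tau> (fclosure X \<tau> (\<Union>\<B>)) ` \<Union>\<B>"
  then obtain y C where C: "C \<in> \<B>" "y \<in> C" and t: "t = finterior X \<tau> (fclosure X \<tau> (\<Union>\<B>)) y"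
    by auto
  have cl_unit: "range (fclosure X \<tau> A) \<subseteq> {0..1}" for A
    using fclosure_in_unit[OF assms] by auto
  have "preopen X \<tau> C \<le> finterior X \<tau> (fclosure X \<tau> C) y"
    unfolding preopen_def using C(2) finterior_in_unit[OF assms cl_unit]
    by (intro finf_lower) auto
  also have "\<dots> \<le> t"
    unfolding t using fclosure_mono[OF assms Union_upper[OF C(1)]]
    by (intro finterior_mono[OF assms cl_unit cl_unit]) (simp add: le_fun_def)
  finally show "\<exists>s\<in>preopen X \<tau> ` \<B>. s \<le> t" using C(1) by auto
qed

lemma preopen_eq_finf_pre_nbhd:
  assumes "fuzzy_family X \<tau>" "A \<subseteq> X"
  shows "preopen X \<tau> A = finf ((\<lambda>x. pre_nbhd X \<tau> x A) ` A)"
proof -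
  have "preopen X \<tau> A = union_closure X (preopen X \<tau>) A"
    using assms preopen_Union_ge[OF assms(1)]
    by (intro union_closure_eq_self[symmetric] fuzzy_family_preopen) auto
  then show ?thesis
    using union_closure_eq_finf_nbhd[OF fuzzy_family_preopen[OF assms(1)] assms(2)]
    by (simp add: pre_nbhd_eq_nbhd)
qed

theorem theorem2p1:
  fixes X :: "'a set" and \<tau> \<beta> :: "'a set \<Rightarrow> real"
  assumes "fuzzifying_topology X \<tau>"
    and "fuzzy_family X \<beta>"
    and "\<forall>A. A \<subseteq> X \<longrightarrow> \<beta> A \<le> preopen X \<tau> A"
  shows "is_pre_base X \<tau> \<beta> \<longleftrightarrow> (\<forall>A. A \<subseteq> X \<longrightarrow> preopen X \<tau> A = union_closure X \<beta> A)"
proof -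
  have \<tau>: "fuzzy_family X \<tau>" using assms(1) unfolding fuzzifying_topology_def by simp
  have pre_base_iff: "is_pre_base X \<tau> \<beta> \<longleftrightarrow>
      (\<forall>x\<in>X. \<forall>A. A \<subseteq> X \<longrightarrow> pre_nbhd X \<tau> x A \<le> nbhd X \<beta> x A)"
    using assms(3) unfolding is_pre_base_def nbhd_def by simp
  have nbhd_le_pre_nbhd: "nbhd X \<beta> x A \<le> pre_nbhd X \<tau> x A" if "A \<subseteq> X" for x A
    unfolding pre_nbhd_eq_nbhd using that assms(3)
    by (intro nbhd_mono_family fuzzy_family_preopen[OF \<tau>]) auto
  show ?thesis
  proof
    assume "is_pre_base X \<tau> \<beta>"
    then have "pre_nbhd X \<tau> x A = nbhd X \<beta> x A" if "A \<subseteq> X" "x \<in> A" for x A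
      using that nbhd_le_pre_nbhd pre_base_iff by (meson antisym subsetD)
    then show "\<forall>A. A \<subseteq> X \<longrightarrow> preopen X \<tau> A = union_closure X \<beta> A"
      by (simp add: preopen_eq_finf_pre_nbhd[OF \<tau>] union_closure_eq_finf_nbhd[OF assms(2)]
          cong: image_cong)
  next
    assume eq: "\<forall>A. A \<subseteq> X \<longrightarrow> preopen X \<tau> A = union_closure X \<beta> A"
    have "pre_nbhd X \<tau> x A \<le> nbhd X \<beta> x A" if "A \<subseteq> X" for x A
    proof -
      have "pre_nbhd X \<tau> x A \<le> nbhd X (union_closure X \<beta>) x A"
        unfolding pre_nbhd_eq_nbhd using that eq
        by (intro nbhd_mono_family fuzzy_family_union_closure[OF assms(2)]) auto
      also have "\<dots> \<le> nbhd X \<beta> x A" using assms(2) that by (rule nbhd_union_closure_le)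
      finally show ?thesis .
    qed
    then show "is_pre_base X \<tau> \<beta>" using pre_base_iff by blast
  qed
qed

end
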